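(* Let $n\ge1$. The eigenvalues of $D^n$ are $1/2$ with multiplicity $2$ and $0$ with multiplicity $2^n-2$. The unit eigenvectors corresponding to the eigenvalue $1/2$ are $\psi_0^n$ and $\psi_1^n$, where $\psi_0^n\in\mathbb{C}^{2^n}$ has $j$-th coordinate ($j=0,\dots,2^n-1$) equal to $2^{-(n-1)/2}i^{c_n(j)}$ for $j$ even and $0$ for $j$ odd, and $\psi_1^n$ has $j$-th coordinate $0$ for $j$ even and $2^{-(n-1)/2}i^{c_n(j)}$ for $j$ odd.
   Context: For $n\ge1$, an $n$-path is a string $\alpha_0\alpha_1\cdots\alpha_n$ with $\alpha_k\in\{0,1\}$, $\alpha_0=0$; the $n$-paths are identified with $j\in\{0,\dots,2^n-1\}$, the path $\omega_j$ being the one whose string is the binary representation of $j$ (with $\alpha_n$ least significant). $D^n$ is the $2^n\times2^n$ matrix with $D^n_{jk}=D^n(\omega_j,\omega_k)$, where $D^n(\omega,\omega')=2^{-n}\prod_{k=1}^n i^{|\alpha_k-\alpha_{k-1}|}\prod_{k=1}^n i^{-|\alpha'_k-\alpha'_{k-1}|}\,\delta_{\alpha_n\alpha'_n}$ for $\omega=\alpha_0\cdots\alpha_n$, $\omega'=\alpha'_0\cdots\alpha'_n$ ($i=\sqrt{-1}$). $c_n(j)$ is the number of $k\in\{1,\dots,n\}$ with $\alpha_k\ne\alpha_{k-1}$ for the path $\omega_j$. *)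

theory Defs
  imports "Jordan_Normal_Form.Char_Poly"
begin

text \<open>The n-path omega_j: alpha_k is bit (n-k) of j (alpha_n least significant),
  for k = 0..n; for j < 2^n, alpha_0 = 0 automatically.\<close>
definition path_alpha :: "nat \<Rightarrow> nat \<Rightarrow> nat \<Rightarrow> int" where
  "path_alpha n j k = (if bit j (n - k) then 1 else 0)"

definition c_count :: "nat \<Rightarrow> nat \<Rightarrow> nat" where
  "c_count n j = card {k \<in> {1..n}. path_alpha n j k \<noteq> path_alpha n j (k - 1)}"

definition D_entry :: "nat \<Rightarrow> nat \<Rightarrow> nat \<Rightarrow> complex" where
  "D_entry n j l =
     complex_of_real (2 powr (- real n))
     * (\<Prod>k=1..n. \<i> powi \<bar>path_alpha n j k - path_alpha n j (k - 1)\<bar>)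
     * (\<Prod>k=1..n. \<i> powi (- \<bar>path_alpha n l k - path_alpha n l (k - 1)\<bar>))
     * (if path_alpha n j n = path_alpha n l n then 1 else 0)"

definition D_mat :: "nat \<Rightarrow> complex mat" where
  "D_mat n = mat (2 ^ n) (2 ^ n) (\<lambda>(j, l). D_entry n j l)"

definition psi0 :: "nat \<Rightarrow> complex vec" where
  "psi0 n = vec (2 ^ n) (\<lambda>j. if even j
      then complex_of_real (2 powr (- (real n - 1) / 2)) * \<i> ^ c_count n j else 0)"

definition psi1 :: "nat \<Rightarrow> complex vec" where
  "psi1 n = vec (2 ^ n) (\<lambda>j. if even j then 0
      else complex_of_real (2 powr (- (real n - 1) / 2)) * \<i> ^ c_count n j)"

definition vnorm2 :: "complex vec \<Rightarrow> real" where
  "vnorm2 v = (\<Sum>j<dim_vec v. (cmod (v $ j))\<^sup>2)"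

definition vinner :: "complex vec \<Rightarrow> complex vec \<Rightarrow> complex" where
  "vinner v w = (\<Sum>j<dim_vec v. v $ j * cnj (w $ j))"

end

theory Submission
  imports Defs "Jordan_Normal_Form.Schur_Decomposition"
begin

text \<open>Write u_j = i^(c_n(j)). The entry D^n_jl is 2^(-n) u_j conj(u_l) if j and l have the same
  parity (the paths end in the same bit) and 0 otherwise, so D^n = (psi0 psi0^* + psi1 psi1^*)/2
  with psi0, psi1 orthonormal: D^n is half the orthogonal projection onto their span. Hence its
  eigenvalues are 0 and 1/2 and its 1/2-eigenspace is that span; as its trace is 1 and the trace is
  the sum of the roots of the characteristic polynomial, the root 1/2 has multiplicity exactly 2.\<close>

lemma smult_vec_left_cancel:
  fixes v w :: "'a :: field vec"
  assumes "c \<noteq> 0" "dim_vec v = dim_vec w" "c \<cdot>\<^sub>v v = c \<cdot>\<^sub>v w"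
  shows "v = w"
proof (rule eq_vecI)
  fix i assume "i < dim_vec w"
  then have "c * v $ i = c * w $ i"
    using assms(2,3) by (metis index_smult_vec(1))
  then show "v $ i = w $ i" using assms(1) by simp
qed (fact assms(2))

lemma smult_vec_right_cancel:
  fixes v :: "'a :: field vec"
  assumes "v \<noteq> 0\<^sub>v (dim_vec v)" "a \<cdot>\<^sub>v v = b \<cdot>\<^sub>v v"
  shows "a = b"
proof -
  obtain i where i: "i < dim_vec v" "v $ i \<noteq> 0"
    using assms(1) by (metis eq_vecI index_zero_vec)
  then have "a * v $ i = b * v $ i"
    using assms(2) by (metis index_smult_vec(1))
  then show ?thesis using i(2) by simp
qed

lemma smult_mat_mult_vec:
  assumes "A \<in> carrier_mat nr nc" "v \<in> carrier_vec nc"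
  shows "(c \<cdot>\<^sub>m A) *\<^sub>v v = c \<cdot>\<^sub>v (A *\<^sub>v v)"
  using assms by (intro eq_vecI) (auto simp: scalar_prod_def sum_distrib_left mult.assoc)

lemma vinner_self_eq_vnorm2: "vinner v v = of_real (vnorm2 v)"
  unfolding vinner_def vnorm2_def by (simp add: complex_norm_square[symmetric])

lemma vinner_commute:
  assumes "dim_vec w = dim_vec v"
  shows "vinner w v = cnj (vinner v w)"
  using assms unfolding vinner_def by (simp add: mult.commute)

lemma vinner_lincomb_left:
  assumes "x \<in> carrier_vec N" "y \<in> carrier_vec N"
  shows "vinner (a \<cdot>\<^sub>v x + b \<cdot>\<^sub>v y) z = a * vinner x z + b * vinner y z"
  using assms unfolding vinner_def
  by (simp add: sum_distrib_left sum.distrib algebra_simps)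

lemma prod_if_eq_power_card:
  "finite K \<Longrightarrow> (\<Prod>k\<in>K. if P k then a else 1) = a ^ card {k \<in> K. P k}"
  by (simp add: prod.If_cases Int_def conj_commute)

lemma sum_lessThan_double_if_parity:
  "(\<Sum>j<2 * m. if even j = b then x else 0) = of_nat m * (x :: 'a :: comm_semiring_1)"
  by (induction m) (auto simp: algebra_simps)

definition mat_trace :: "'a :: comm_ring_1 mat \<Rightarrow> 'a" where
  "mat_trace A = (\<Sum>i<dim_row A. A $$ (i, i))"

lemma mat_trace_mult_comm:
  assumes A: "A \<in> carrier_mat n m" and B: "B \<in> carrier_mat m n"
  shows "mat_trace (A * B) = mat_trace (B * A)"
proof -
  have "mat_trace (A * B) = (\<Sum>i<n. \<Sum>k<m. A $$ (i, k) * B $$ (k, i))"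
    using A B by (simp add: mat_trace_def scalar_prod_def atLeast0LessThan)
  also have "\<dots> = (\<Sum>k<m. \<Sum>i<n. B $$ (k, i) * A $$ (i, k))"
    by (subst sum.swap) (simp add: mult.commute)
  also have "\<dots> = mat_trace (B * A)"
    using A B by (simp add: mat_trace_def scalar_prod_def atLeast0LessThan)
  finally show ?thesis .
qed

lemma similar_mat_wit_mat_trace:
  assumes "similar_mat_wit A B P Q"
  shows "mat_trace A = mat_trace B"
proof -
  obtain n where A: "A \<in> carrier_mat n n" and B: "B \<in> carrier_mat n n"
    and P: "P \<in> carrier_mat n n" and Q: "Q \<in> carrier_mat n n"
    and QP: "Q * P = 1\<^sub>m n" and APBQ: "A = P * B * Q"
    using assms unfolding similar_mat_wit_def Let_def by auto
  have "mat_trace A = mat_trace (Q * (P * B))"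
    using APBQ mat_trace_mult_comm[of "P * B" n n Q] P B Q by simp
  also have "Q * (P * B) = B"
    using P B Q QP by (simp add: assoc_mult_mat[symmetric])
  finally show ?thesis .
qed

lemma prod_list_linear_factors_two_roots:
  assumes "set as \<subseteq> {0, c :: 'a :: comm_ring_1}"
  shows "(\<Prod>a\<leftarrow>as. [:- a, 1:]) = [:- c, 1:] ^ count_list as c * [:0, 1:] ^ (length as - count_list as c)"
  using assms
proof (induction as)
  case (Cons a as)
  have le: "count_list as c \<le> length as" by (induction as) auto
  from Cons.prems consider "a = c" | "a = 0" "a \<noteq> c" by auto
  then show ?case
  proof cases
    case 1
    then show ?thesis using Cons by (simp del: mult_pCons_left add: mult.assoc)
  next
    case 2
    then have "length (a # as) - count_list (a # as) c = Suc (length as - count_list as c)"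
      using le by simp
    then show ?thesis using Cons 2 by (simp del: mult_pCons_left add: mult.left_commute)
  qed
qed simp

lemma sum_list_two_values:
  assumes "set as \<subseteq> {0, c :: 'a :: semiring_1}"
  shows "sum_list as = of_nat (count_list as c) * c"
  using assms by (induction as) (auto simp: algebra_simps)

lemma char_poly_two_eigenvalues:
  fixes A :: "complex mat"
  assumes A: "A \<in> carrier_mat n n" and "c \<noteq> 0"
    and eigenvalues: "\<And>e. eigenvalue A e \<Longrightarrow> e = 0 \<or> e = c"
    and trace: "mat_trace A = of_nat k * c"
  shows "char_poly A = [:- c, 1:] ^ k * [:0, 1:] ^ (n - k)"
proof -
  obtain as where cp: "char_poly A = (\<Prod>a\<leftarrow>as. [:- a, 1:])" and len: "length as = n"
    using char_poly_factorized[OF A] by blast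
  obtain B P Q where "schur_decomposition A as = (B, P, Q)" by (metis prod_cases3)
  \<comment> \<open>the triangular Schur form carries the roots on its diagonal\<close>
  from schur_decomposition[OF A cp this]
  have sim: "similar_mat_wit A B P Q" and diag: "diag_mat B = as" by auto
  have roots: "set as \<subseteq> {0, c}"
  proof
    fix e assume "e \<in> set as"
    then have "poly (char_poly A) e = 0"
      unfolding cp by (simp add: poly_prod_list prod_list_zero_iff)
    then show "e \<in> {0, c}" using eigenvalues eigenvalue_root_char_poly[OF A] by blast
  qed
  have "mat_trace A = sum_list as"
    unfolding similar_mat_wit_mat_trace[OF sim] diag[symmetric]
    by (simp add: mat_trace_def diag_mat_def sum_list_distinct_conv_sum_set atLeast0LessThan)
  then have "count_list as c = k"
    using trace sum_list_two_values[OF roots] \<open>c \<noteq> 0\<close> by simp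
  then show ?thesis
    unfolding cp prod_list_linear_factors_two_roots[OF roots] len by simp
qed

definition pair_proj :: "nat \<Rightarrow> complex vec \<Rightarrow> complex vec \<Rightarrow> complex mat" where
  "pair_proj N p q = mat N N (\<lambda>(j, l). p $ j * cnj (p $ l) + q $ j * cnj (q $ l))"

locale orthonormal_pair =
  fixes N :: nat and p q :: "complex vec"
  assumes p_carrier: "p \<in> carrier_vec N" and q_carrier: "q \<in> carrier_vec N"
    and vnorm2_p: "vnorm2 p = 1" and vnorm2_q: "vnorm2 q = 1"
    and vinner_p_q: "vinner p q = 0"
begin

abbreviation P :: "complex mat" where "P \<equiv> pair_proj N p q"

lemma P_carrier: "P \<in> carrier_mat N N"
  by (simp add: pair_proj_def)

lemma vinner_p_p: "vinner p p = 1" and vinner_q_q: "vinner q q = 1"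
  and vinner_q_p: "vinner q p = 0"
  using vinner_self_eq_vnorm2[of p] vinner_self_eq_vnorm2[of q] vnorm2_p vnorm2_q
    vinner_commute[of q p] vinner_p_q p_carrier q_carrier by auto

lemma p_nonzero: "p \<noteq> 0\<^sub>v N" and q_nonzero: "q \<noteq> 0\<^sub>v N"
  using vinner_p_p vinner_q_q by (auto simp: vinner_def)

lemma pair_proj_mult_vec:
  assumes v: "v \<in> carrier_vec N"
  shows "P *\<^sub>v v = vinner v p \<cdot>\<^sub>v p + vinner v q \<cdot>\<^sub>v q"
proof (rule eq_vecI)
  fix j assume "j < dim_vec (vinner v p \<cdot>\<^sub>v p + vinner v q \<cdot>\<^sub>v q)"
  then have j: "j < N" using q_carrier by simp
  have "(P *\<^sub>v v) $ j = (\<Sum>l<N. (p $ j * cnj (p $ l) + q $ j * cnj (q $ l)) * v $ l)"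
    using j v by (simp add: pair_proj_def scalar_prod_def atLeast0LessThan)
  also have "\<dots> = vinner v p * p $ j + vinner v q * q $ j"
    using v p_carrier q_carrier
    by (simp add: vinner_def sum_distrib_left sum_distrib_right sum.distrib algebra_simps)
  finally show "(P *\<^sub>v v) $ j = (vinner v p \<cdot>\<^sub>v p + vinner v q \<cdot>\<^sub>v q) $ j"
    using j p_carrier q_carrier by simp
qed (use p_carrier q_carrier in \<open>simp add: pair_proj_def\<close>)

lemma pair_proj_mult_lincomb:
  "P *\<^sub>v (a \<cdot>\<^sub>v p + b \<cdot>\<^sub>v q) = a \<cdot>\<^sub>v p + b \<cdot>\<^sub>v q"
  using p_carrier q_carrier
  by (simp add: pair_proj_mult_vec vinner_lincomb_left vinner_p_p vinner_q_q vinner_p_q vinner_q_p)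

lemma pair_proj_idem_vec:
  assumes "v \<in> carrier_vec N"
  shows "P *\<^sub>v (P *\<^sub>v v) = P *\<^sub>v v"
  using assms by (simp add: pair_proj_mult_vec pair_proj_mult_lincomb)

lemma pair_proj_mult_p: "P *\<^sub>v p = p" and pair_proj_mult_q: "P *\<^sub>v q = q"
  using p_carrier q_carrier
  unfolding pair_proj_mult_vec[OF p_carrier] pair_proj_mult_vec[OF q_carrier]
  by (auto simp: vinner_p_p vinner_q_q vinner_p_q vinner_q_p intro!: eq_vecI)

lemma eigenvector_p: "c \<noteq> 0 \<Longrightarrow> eigenvector (c \<cdot>\<^sub>m P) p c"
  and eigenvector_q: "c \<noteq> 0 \<Longrightarrow> eigenvector (c \<cdot>\<^sub>m P) q c"
  using P_carrier p_carrier q_carrier p_nonzero q_nonzero pair_proj_mult_p pair_proj_mult_q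
  by (simp_all add: eigenvector_def smult_mat_mult_vec)

lemma eigenvalue_smult_pair_proj:
  assumes "eigenvalue (c \<cdot>\<^sub>m P) e"
  shows "e = 0 \<or> e = c"
proof (cases "e = 0")
  case False
  obtain v where v: "v \<in> carrier_vec N" and v0: "v \<noteq> 0\<^sub>v N"
    and ev: "c \<cdot>\<^sub>v (P *\<^sub>v v) = e \<cdot>\<^sub>v v"
    using assms P_carrier by (auto simp: eigenvalue_def eigenvector_def smult_mat_mult_vec)
  have Pv: "P *\<^sub>v v \<in> carrier_vec N" using P_carrier v by simp
  have dims: "dim_vec (P *\<^sub>v v) = dim_vec v" and v0': "v \<noteq> 0\<^sub>v (dim_vec v)"
    using P_carrier v v0 by simp_all
  have "e \<cdot>\<^sub>v (P *\<^sub>v v) = P *\<^sub>v (c \<cdot>\<^sub>v (P *\<^sub>v v))"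
    using mult_mat_vec[OF P_carrier v] by (simp add: ev)
  also have "\<dots> = c \<cdot>\<^sub>v (P *\<^sub>v v)"
    using mult_mat_vec[OF P_carrier Pv] by (simp add: pair_proj_idem_vec[OF v])
  also have "\<dots> = e \<cdot>\<^sub>v v" by (fact ev)
  finally have "P *\<^sub>v v = v" by (rule smult_vec_left_cancel[OF False dims])
  then have "c \<cdot>\<^sub>v v = e \<cdot>\<^sub>v v" using ev by simp
  then show ?thesis using smult_vec_right_cancel[OF v0'] by simp
qed simp

lemma smult_pair_proj_eigenvector_in_span:
  assumes "c \<noteq> 0" and v: "v \<in> carrier_vec N" and ev: "(c \<cdot>\<^sub>m P) *\<^sub>v v = c \<cdot>\<^sub>v v"
  shows "v = vinner v p \<cdot>\<^sub>v p + vinner v q \<cdot>\<^sub>v q"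
proof -
  have dims: "dim_vec (P *\<^sub>v v) = dim_vec v"
    using v P_carrier by simp
  have "c \<cdot>\<^sub>v (P *\<^sub>v v) = c \<cdot>\<^sub>v v"
    using ev v P_carrier by (simp add: smult_mat_mult_vec)
  then have "P *\<^sub>v v = v" by (rule smult_vec_left_cancel[OF \<open>c \<noteq> 0\<close> dims])
  then show ?thesis using pair_proj_mult_vec[OF v] by simp
qed

lemma mat_trace_smult_pair_proj: "mat_trace (c \<cdot>\<^sub>m P) = of_nat 2 * c"
proof -
  have "mat_trace (c \<cdot>\<^sub>m P) = c * (vinner p p + vinner q q)"
    using p_carrier q_carrier
    by (simp add: mat_trace_def pair_proj_def vinner_def sum_distrib_left sum.distrib algebra_simps)
  then show ?thesis by (simp add: vinner_p_p vinner_q_q)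
qed

lemma char_poly_smult_pair_proj:
  "c \<noteq> 0 \<Longrightarrow> char_poly (c \<cdot>\<^sub>m P) = [:- c, 1:] ^ 2 * [:0, 1:] ^ (N - 2)"
  using P_carrier eigenvalue_smult_pair_proj mat_trace_smult_pair_proj
  by (intro char_poly_two_eigenvalues) auto

end

definition path_phase :: "nat \<Rightarrow> nat \<Rightarrow> complex" where
  "path_phase n j = \<i> ^ c_count n j"

lemma norm_path_phase: "cmod (path_phase n j) = 1"
  by (simp add: path_phase_def norm_power)

lemma prod_powi_path_alpha:
  "(\<Prod>k=1..n. \<i> powi \<bar>path_alpha n j k - path_alpha n j (k - 1)\<bar>) = path_phase n j"
proof -
  have "\<i> powi \<bar>path_alpha n j k - path_alpha n j (k - 1)\<bar>
      = (if path_alpha n j k \<noteq> path_alpha n j (k - 1) then \<i> else 1)" for k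
    by (simp add: path_alpha_def)
  then show ?thesis
    by (simp add: prod_if_eq_power_card path_phase_def c_count_def)
qed

lemma prod_powi_neg_path_alpha:
  "(\<Prod>k=1..n. \<i> powi (- \<bar>path_alpha n j k - path_alpha n j (k - 1)\<bar>)) = cnj (path_phase n j)"
proof -
  have "\<i> powi (- \<bar>path_alpha n j k - path_alpha n j (k - 1)\<bar>)
      = (if path_alpha n j k \<noteq> path_alpha n j (k - 1) then cnj \<i> else 1)" for k
    by (simp add: path_alpha_def power_int_minus)
  then show ?thesis
    by (simp add: prod_if_eq_power_card path_phase_def c_count_def)
qed

lemma path_alpha_last_eq_iff: "path_alpha n j n = path_alpha n l n \<longleftrightarrow> (even j \<longleftrightarrow> even l)"
  by (simp add: path_alpha_def bit_0)

lemma D_entry_eq: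
  "D_entry n j l = 2 powr (- real n) * path_phase n j * cnj (path_phase n l)
     * (if even j = even l then 1 else 0)"
  unfolding D_entry_def prod_powi_path_alpha prod_powi_neg_path_alpha path_alpha_last_eq_iff
  by simp

definition psi_scale :: "nat \<Rightarrow> real" where
  "psi_scale n = 2 powr (- (real n - 1) / 2)"

lemma psi_scale_square: "psi_scale n * psi_scale n = 2 * 2 powr (- real n)"
  by (simp add: psi_scale_def powr_add[symmetric] powr_mult_base diff_divide_distrib)

lemma dim_psi: "dim_vec (psi0 n) = 2 ^ n" "dim_vec (psi1 n) = 2 ^ n"
  by (simp_all add: psi0_def psi1_def)

lemma psi0_nth: "j < 2 ^ n \<Longrightarrow> psi0 n $ j = (if even j then psi_scale n * path_phase n j else 0)"
  and psi1_nth: "j < 2 ^ n \<Longrightarrow> psi1 n $ j = (if even j then 0 else psi_scale n * path_phase n j)"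
  by (simp_all add: psi0_def psi1_def psi_scale_def path_phase_def)

lemma D_mat_eq_half_pair_proj: "D_mat n = (1/2) \<cdot>\<^sub>m pair_proj (2 ^ n) (psi0 n) (psi1 n)"
proof (rule eq_matI)
  fix j l
  assume "j < dim_row ((1/2) \<cdot>\<^sub>m pair_proj (2 ^ n) (psi0 n) (psi1 n))"
    and "l < dim_col ((1/2) \<cdot>\<^sub>m pair_proj (2 ^ n) (psi0 n) (psi1 n))"
  then have j: "j < 2 ^ n" and l: "l < 2 ^ n" by (simp_all add: pair_proj_def)
  have s: "complex_of_real (psi_scale n) * complex_of_real (psi_scale n) = 2 * 2 powr (- real n)"
    by (simp flip: of_real_mult add: psi_scale_square)
  show "D_mat n $$ (j, l) = ((1/2) \<cdot>\<^sub>m pair_proj (2 ^ n) (psi0 n) (psi1 n)) $$ (j, l)"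
    using j l
    by (simp add: D_mat_def pair_proj_def D_entry_eq psi0_nth psi1_nth algebra_simps s)
qed (simp_all add: D_mat_def pair_proj_def)

lemma psi_scale_square_mult_card:
  assumes "n \<ge> 1"
  shows "(psi_scale n)\<^sup>2 * 2 ^ (n - 1) = 1"
proof -
  have "(2::real) ^ (n - 1) = 2 powr (real n - 1)"
    using assms by (simp add: powr_realpow[symmetric] of_nat_diff)
  moreover have "(2::real) powr (- real n) * 2 powr (real n - 1) = 2 powr (- 1)"
    by (simp flip: powr_add)
  ultimately show ?thesis
    by (simp add: power2_eq_square psi_scale_square powr_minus_divide)
qed

lemma vnorm2_psi0: "n \<ge> 1 \<Longrightarrow> vnorm2 (psi0 n) = 1"
  and vnorm2_psi1: "n \<ge> 1 \<Longrightarrow> vnorm2 (psi1 n) = 1"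
proof -
  assume n: "n \<ge> 1"
  then have N: "(2::nat) ^ n = 2 * 2 ^ (n - 1)" by (cases n) auto
  have entry0: "(cmod (psi0 n $ j))\<^sup>2 = (if even j = True then (psi_scale n)\<^sup>2 else 0)"
    and entry1: "(cmod (psi1 n $ j))\<^sup>2 = (if even j = False then (psi_scale n)\<^sup>2 else 0)"
    if "j < 2 ^ n" for j
    using that by (simp_all add: psi0_nth psi1_nth norm_mult norm_path_phase)
  have "vnorm2 (psi0 n) = (\<Sum>j::nat<2 ^ n. if even j = True then (psi_scale n)\<^sup>2 else 0)"
    unfolding vnorm2_def dim_psi by (rule sum.cong) (simp_all add: entry0)
  moreover have "vnorm2 (psi1 n) = (\<Sum>j::nat<2 ^ n. if even j = False then (psi_scale n)\<^sup>2 else 0)"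
    unfolding vnorm2_def dim_psi by (rule sum.cong) (simp_all add: entry1)
  ultimately show "vnorm2 (psi0 n) = 1" "vnorm2 (psi1 n) = 1"
    unfolding N sum_lessThan_double_if_parity using psi_scale_square_mult_card[OF n]
    by (simp_all add: mult.commute)
qed

lemma vinner_psi0_psi1: "vinner (psi0 n) (psi1 n) = 0"
  unfolding vinner_def dim_psi by (intro sum.neutral) (simp add: psi0_nth psi1_nth)

lemma orthonormal_pair_psi: "n \<ge> 1 \<Longrightarrow> orthonormal_pair (2 ^ n) (psi0 n) (psi1 n)"
  using dim_psi vnorm2_psi0 vnorm2_psi1 vinner_psi0_psi1
  by unfold_locales (auto intro: carrier_vecI)

theorem theorem5p6:
  fixes n :: nat
  assumes "n \<ge> 1"
  shows "char_poly (D_mat n) = [:- (1/2), 1:] ^ 2 * [:0, 1:] ^ (2 ^ n - 2)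
     \<and> eigenvector (D_mat n) (psi0 n) (1/2)
     \<and> eigenvector (D_mat n) (psi1 n) (1/2)
     \<and> vnorm2 (psi0 n) = 1 \<and> vnorm2 (psi1 n) = 1
     \<and> vinner (psi0 n) (psi1 n) = 0
     \<and> (\<forall>v \<in> carrier_vec (2 ^ n). D_mat n *\<^sub>v v = (1/2) \<cdot>\<^sub>v v \<longrightarrow>
          (\<exists>a b. v = a \<cdot>\<^sub>v psi0 n + b \<cdot>\<^sub>v psi1 n))"
proof -
  interpret orthonormal_pair "2 ^ n" "psi0 n" "psi1 n"
    using orthonormal_pair_psi[OF assms] .
  have half: "(1/2 :: complex) \<noteq> 0" by simp
  show ?thesis
    unfolding D_mat_eq_half_pair_proj
  proof (intro conjI ballI impI)
    fix v :: "complex vec"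
    assume "v \<in> carrier_vec (2 ^ n)" "((1/2) \<cdot>\<^sub>m P) *\<^sub>v v = (1/2) \<cdot>\<^sub>v v"
    then show "\<exists>a b. v = a \<cdot>\<^sub>v psi0 n + b \<cdot>\<^sub>v psi1 n"
      by (blast dest: smult_pair_proj_eigenvector_in_span[OF half])
  qed (fact char_poly_smult_pair_proj[OF half] eigenvector_p[OF half] eigenvector_q[OF half]
      vnorm2_p vnorm2_q vinner_p_q)+
qed

end
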